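(* Let $\beta\in(0,1)$. With the medium-expectation rounding defined in the context, suppose $|\mathcal{M}_1^*(k)|\le k^\beta$. If $X_i$ ($i\in\mathcal{M}_1^*(k)$) are independent indicators with $\mathbb{E}[X_i]=p_i$ and $Y_i$ ($i\in\mathcal{M}_1^*(k)$) are independent indicators with $\mathbb{E}[Y_i]=q_i$, then $$\left\|\sum_{i\in\mathcal{M}_1^*(k)}X_i-\sum_{i\in\mathcal{M}_1^*(k)}Y_i\right\|\le\frac{1}{k^{1-\beta}}.$$
   Context: $\|\cdot\|$ is total variation distance. Let $k$ be a positive integer, $\alpha\in(0,1)$, and $p_1,\dots,p_n\in[0,1]$. For $j=0,1,\dots,\lfloor k/2\rfloor$ let $I_j=[j/k,(j+1)/k)$ if $j<\lfloor k/2\rfloor$ and $I_{\lfloor k/2\rfloor}=[\lfloor k/2\rfloor/k,1/2]$; let $I^*_j=\{i:p_i\in I_j\}=\{j_1,\dots,j_{n_j}\}$ (listed in some fixed order, $n_j=|I^*_j|$), $p^j_i:=p_{j_i}$ and $\delta^j_i:=p^j_i-j/k$. Let $\mathcal{M}_1^*(k)=\bigcup_{j=\lfloor k^\alpha\rfloor}^{\lfloor k/2\rfloor}I^*_j$. Medium-expectation rounding: for $j=\lfloor k^\alpha\rfloor,\dots,\lfloor k/2\rfloor$ let $S_j=\sum_{i=1}^{n_j}\delta^j_i$, $m_j=\lfloor kS_j\rfloor$, and set $q_{j_i}=(j+1)/k$ for $i=1,\dots,m_j$ and $q_{j_i}=j/k$ for $i=m_j+1,\dots,n_j$. *)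

theory Defs
  imports "HOL-Probability.Probability"
begin

definition Iint :: "nat \<Rightarrow> nat \<Rightarrow> real set" where
  "Iint k j = (if j < k div 2 then {real j / real k ..< (real j + 1) / real k}
               else {real j / real k .. 1/2})"

definition Istar :: "nat \<Rightarrow> nat \<Rightarrow> (nat \<Rightarrow> real) \<Rightarrow> nat \<Rightarrow> nat set" where
  "Istar k n p j = {i. i < n \<and> p i \<in> Iint k j}"

definition jrange :: "nat \<Rightarrow> real \<Rightarrow> nat set" where
  "jrange k \<alpha> = {nat \<lfloor>real k powr \<alpha>\<rfloor> .. k div 2}"

definition M1star :: "nat \<Rightarrow> real \<Rightarrow> nat \<Rightarrow> (nat \<Rightarrow> real) \<Rightarrow> nat set" where
  "M1star k \<alpha> n p = (\<Union>j\<in>jrange k \<alpha>. Istar k n p j)"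

definition Ssum :: "nat \<Rightarrow> nat \<Rightarrow> (nat \<Rightarrow> real) \<Rightarrow> nat \<Rightarrow> real" where
  "Ssum k n p j = (\<Sum>i\<in>Istar k n p j. p i - real j / real k)"

text \<open>Medium-expectation rounding: ord j is the fixed listing j_1,...,j_{n_j} of I*_j
  (0-based list positions), and q is the rounded vector on M_1^*(k).\<close>
definition medium_rounding ::
  "nat \<Rightarrow> real \<Rightarrow> nat \<Rightarrow> (nat \<Rightarrow> real) \<Rightarrow> (nat \<Rightarrow> nat list) \<Rightarrow> (nat \<Rightarrow> real) \<Rightarrow> bool" where
  "medium_rounding k \<alpha> n p ord q \<longleftrightarrow>
     (\<forall>j\<in>jrange k \<alpha>. distinct (ord j) \<and> set (ord j) = Istar k n p j \<and>
        (\<forall>t < length (ord j).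
           q (ord j ! t) = (if int t < \<lfloor>real k * Ssum k n p j\<rfloor>
                            then (real j + 1) / real k else real j / real k)))"

definition sum_indicators_law :: "nat set \<Rightarrow> (nat \<Rightarrow> real) \<Rightarrow> nat pmf" where
  "sum_indicators_law A p =
     map_pmf (\<lambda>f. \<Sum>i\<in>A. if f i then 1 else 0)
             (Pi_pmf A False (\<lambda>i. bernoulli_pmf (p i)))"

definition tv_dist :: "'a pmf \<Rightarrow> 'a pmf \<Rightarrow> real" where
  "tv_dist M N = (SUP A. \<bar>measure_pmf.prob M A - measure_pmf.prob N A\<bar>)"

end

theory Submission imports Defs begin

(* The rounding moves every mean p_i, i \<in> M_1^*(k), to one of the two
   endpoints j/k, (j+1)/k of the interval I_j containing p_i, so |p_i - q_i| \<le> 1/k.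
   The theorem then follows from a general coupling-type estimate: the total variation
   distance between the laws of two sums of independent indicators over a finite index
   set A is at most \<Sum>_{i\<in>A} |p_i - q_i|.  Summing over at most k^\<beta> indices gives
   k^\<beta>/k = 1/k^{1-\<beta>}. *)

lemma prob_bind_bernoulli:
  assumes "0 \<le> a" "a \<le> 1"
  shows "measure_pmf.prob (bind_pmf (bernoulli_pmf a) F) S =
         a * measure_pmf.prob (F True) S + (1 - a) * measure_pmf.prob (F False) S"
proof -
  have "emeasure (measure_pmf (bind_pmf (bernoulli_pmf a) F)) S
      = (\<integral>\<^sup>+y. ennreal (measure_pmf.prob (F y) S) \<partial>bernoulli_pmf a)"
    by (subst emeasure_bind_pmf) (simp add: measure_pmf.emeasure_eq_measure)
  also have "\<dots> = ennreal (a * measure_pmf.prob (F True) S + (1 - a) * measure_pmf.prob (F False) S)"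
    using assms by (subst nn_integral_bernoulli_pmf) (auto simp: ennreal_mult' ennreal_plus mult.commute)
  finally have "ennreal (measure_pmf.prob (bind_pmf (bernoulli_pmf a) F) S)
      = ennreal (a * measure_pmf.prob (F True) S + (1 - a) * measure_pmf.prob (F False) S)"
    by (simp only: measure_pmf.emeasure_eq_measure)
  then show ?thesis
    using assms by (subst (asm) ennreal_inj) (auto intro!: add_nonneg_nonneg mult_nonneg_nonneg)
qed

lemma prob_Pi_bernoulli_diff:
  assumes "finite I" and "\<forall>i\<in>I. 0 \<le> P i \<and> P i \<le> 1 \<and> 0 \<le> Q i \<and> Q i \<le> 1"
  shows "\<bar>measure_pmf.prob (Pi_pmf I d (\<lambda>i. bernoulli_pmf (P i))) S
          - measure_pmf.prob (Pi_pmf I d (\<lambda>i. bernoulli_pmf (Q i))) S\<bar> \<le> (\<Sum>i\<in>I. \<bar>P i - Q i\<bar>)"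
  using assms
proof (induction I arbitrary: S rule: finite_induct)
  case empty
  then show ?case by simp
next
  case (insert x A)
  (* conditional probabilities of S given the value y of coordinate x *)
  define hP where "hP y = measure_pmf.prob (Pi_pmf A d (\<lambda>i. bernoulli_pmf (P i))) ((\<lambda>f. f(x:=y)) -` S)" for y
  define hQ where "hQ y = measure_pmf.prob (Pi_pmf A d (\<lambda>i. bernoulli_pmf (Q i))) ((\<lambda>f. f(x:=y)) -` S)" for y
  have Pi_insert: "Pi_pmf (insert x A) d R = bind_pmf (R x) (\<lambda>y. map_pmf (\<lambda>f. f(x:=y)) (Pi_pmf A d R))" for R
    using insert.hyps by (simp add: Pi_pmf_insert' map_pmf_def)
  have Px: "0 \<le> P x" "P x \<le> 1" "0 \<le> Q x" "Q x \<le> 1" using insert.prems by auto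
  have probP: "measure_pmf.prob (Pi_pmf (insert x A) d (\<lambda>i. bernoulli_pmf (P i))) S
      = P x * hP True + (1 - P x) * hP False"
    unfolding hP_def by (subst Pi_insert, subst prob_bind_bernoulli) (use Px in auto)
  have probQ: "measure_pmf.prob (Pi_pmf (insert x A) d (\<lambda>i. bernoulli_pmf (Q i))) S
      = Q x * hQ True + (1 - Q x) * hQ False"
    unfolding hQ_def by (subst Pi_insert, subst prob_bind_bernoulli) (use Px in auto)
  define \<Delta> where "\<Delta> = (\<Sum>i\<in>A. \<bar>P i - Q i\<bar>)"
  have IH: "\<bar>hP y - hQ y\<bar> \<le> \<Delta>" for y
    unfolding hP_def hQ_def \<Delta>_def using insert.IH insert.prems by auto
  have hQ_range: "\<bar>hQ True - hQ False\<bar> \<le> 1"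
    unfolding hQ_def by (simp add: abs_le_iff) (smt (verit) measure_pmf.prob_le_1 measure_nonneg)
  (* the change splits into the changes of the conditional probabilities, weighted by
     P x and 1 - P x, plus the change of the weight itself *)
  have change: "P x * hP True + (1 - P x) * hP False - (Q x * hQ True + (1 - Q x) * hQ False)
      = P x * (hP True - hQ True) + (1 - P x) * (hP False - hQ False)
        + (P x - Q x) * (hQ True - hQ False)"
    by (simp add: algebra_simps)
  have bound1: "\<bar>P x * (hP True - hQ True)\<bar> \<le> P x * \<Delta>"
    using IH Px by (simp add: abs_mult mult_left_mono)
  have bound0: "\<bar>(1 - P x) * (hP False - hQ False)\<bar> \<le> (1 - P x) * \<Delta>"
    using IH Px by (simp add: abs_mult mult_left_mono)
  have bound_weight: "\<bar>(P x - Q x) * (hQ True - hQ False)\<bar> \<le> \<bar>P x - Q x\<bar>"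
    using hQ_range by (simp add: abs_mult mult_left_le)
  have "\<bar>P x * hP True + (1 - P x) * hP False - (Q x * hQ True + (1 - Q x) * hQ False)\<bar>
      \<le> \<bar>P x * (hP True - hQ True)\<bar> + \<bar>(1 - P x) * (hP False - hQ False)\<bar>
        + \<bar>(P x - Q x) * (hQ True - hQ False)\<bar>"
    unfolding change by (meson abs_triangle_ineq add_right_mono order_trans)
  also have "\<dots> \<le> P x * \<Delta> + (1 - P x) * \<Delta> + \<bar>P x - Q x\<bar>"
    using bound1 bound0 bound_weight by linarith
  also have "\<dots> = \<Delta> + \<bar>P x - Q x\<bar>"
    by (simp add: algebra_simps)
  finally show ?case using probP probQ insert.hyps by (simp add: \<Delta>_def)
qed

lemma tv_dist_sum_indicators_law:
  assumes "finite A" and "\<forall>i\<in>A. 0 \<le> p i \<and> p i \<le> 1 \<and> 0 \<le> q i \<and> q i \<le> 1"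
  shows "tv_dist (sum_indicators_law A p) (sum_indicators_law A q) \<le> (\<Sum>i\<in>A. \<bar>p i - q i\<bar>)"
  unfolding tv_dist_def
proof (rule cSUP_least)
  fix E
  let ?count = "\<lambda>f. \<Sum>i\<in>A. if f i then 1 else (0::nat)"
  show "\<bar>measure_pmf.prob (sum_indicators_law A p) E - measure_pmf.prob (sum_indicators_law A q) E\<bar>
      \<le> (\<Sum>i\<in>A. \<bar>p i - q i\<bar>)"
    using prob_Pi_bernoulli_diff[OF assms, of False "?count -` E"]
    unfolding sum_indicators_law_def by simp
qed simp

(* Every interval I_j with j \<le> \<lfloor>k/2\<rfloor> lies in [j/k, (j+1)/k]; for the last one this
   uses 1/2 \<le> (\<lfloor>k/2\<rfloor>+1)/k. *)
lemma Iint_subset: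
  assumes "k > 0" "j \<le> k div 2" "x \<in> Iint k j"
  shows "real j / real k \<le> x \<and> x \<le> (real j + 1) / real k"
proof (cases "j < k div 2")
  case True
  then show ?thesis using assms(3) unfolding Iint_def by auto
next
  case False
  then have "j = k div 2" using assms(2) by simp
  then have "k \<le> 2 * (j + 1)" by presburger
  then have "real k \<le> real (2 * (j + 1))" by (simp only: of_nat_le_iff)
  then have "real k \<le> 2 * (real j + 1)" by simp
  then have "1/2 \<le> (real j + 1) / real k" using assms(1) by (simp add: field_simps)
  moreover have "real j / real k \<le> x \<and> x \<le> 1/2"
    using False assms(3) unfolding Iint_def by auto
  ultimately show ?thesis by linarith
qed

lemma finite_M1star: "finite (M1star k \<alpha> n p)"
  unfolding M1star_def Istar_def jrange_def by auto

lemma medium_rounding_close: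
  assumes "k > 0" "medium_rounding k \<alpha> n p ord q" "i \<in> M1star k \<alpha> n p"
  shows "0 \<le> q i \<and> q i \<le> 1 \<and> \<bar>p i - q i\<bar> \<le> 1 / real k"
proof -
  obtain j where j: "j \<in> jrange k \<alpha>" "i \<in> Istar k n p j"
    using assms(3) unfolding M1star_def by auto
  have j_le: "j \<le> k div 2" using j(1) unfolding jrange_def by auto
  have rounding: "set (ord j) = Istar k n p j \<and>
        (\<forall>t < length (ord j). q (ord j ! t) \<in> {(real j + 1) / real k, real j / real k})"
    using assms(2) j(1) unfolding medium_rounding_def by auto
  then obtain t where "t < length (ord j)" "ord j ! t = i"
    using j(2) by (metis in_set_conv_nth)
  then have q_endpoint: "q i = (real j + 1) / real k \<or> q i = real j / real k"
    using rounding by auto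
  have p_between: "real j / real k \<le> p i \<and> p i \<le> (real j + 1) / real k"
    using Iint_subset[OF assms(1) j_le] j(2) unfolding Istar_def by auto
  have "j + 1 \<le> k" using j_le assms(1) by presburger
  then have "real j + 1 \<le> real k" by linarith
  then have "0 \<le> q i \<and> q i \<le> 1" using q_endpoint assms(1) by auto
  moreover have "\<bar>p i - q i\<bar> \<le> 1 / real k"
    using q_endpoint p_between by (auto simp: abs_le_iff diff_divide_distrib add_divide_distrib)
  ultimately show ?thesis by blast
qed

theorem mainTheorem12:
  fixes k n :: nat and \<alpha> \<beta> :: real and p q :: "nat \<Rightarrow> real" and ord :: "nat \<Rightarrow> nat list"
  assumes "k > 0" and "0 < \<alpha>" and "\<alpha> < 1" and "0 < \<beta>" and "\<beta> < 1"
    and "\<forall>i<n. 0 \<le> p i \<and> p i \<le> 1"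
    and "medium_rounding k \<alpha> n p ord q"
    and "real (card (M1star k \<alpha> n p)) \<le> real k powr \<beta>"
  shows "tv_dist (sum_indicators_law (M1star k \<alpha> n p) p)
                 (sum_indicators_law (M1star k \<alpha> n p) q) \<le> 1 / real k powr (1 - \<beta>)"
proof -
  let ?M = "M1star k \<alpha> n p"
  have close: "\<forall>i\<in>?M. 0 \<le> q i \<and> q i \<le> 1 \<and> \<bar>p i - q i\<bar> \<le> 1 / real k"
    using medium_rounding_close[OF assms(1,7)] by blast
  have p_prob: "\<forall>i\<in>?M. 0 \<le> p i \<and> p i \<le> 1"
    using assms(6) unfolding M1star_def Istar_def by auto
  have "tv_dist (sum_indicators_law ?M p) (sum_indicators_law ?M q) \<le> (\<Sum>i\<in>?M. \<bar>p i - q i\<bar>)"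
    using tv_dist_sum_indicators_law[OF finite_M1star] close p_prob by blast
  also have "\<dots> \<le> real (card ?M) / real k"
    using sum_mono[of ?M "\<lambda>i. \<bar>p i - q i\<bar>" "\<lambda>_. 1 / real k"] close by simp
  also have "\<dots> \<le> real k powr \<beta> / real k"
    using assms(1,8) by (simp add: divide_right_mono)
  also have "\<dots> = 1 / real k powr (1 - \<beta>)"
    using assms(1) by (simp add: powr_diff)
  finally show ?thesis .
qed

end
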